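(* Let $\mathcal I$ be an ideal on $\mathbb N$ with the Baire property, and let $\sum_n x_n$ be a series in a Banach space $X$. Then $\sum_n x_n$ is unconditionally convergent if and only if the set $$A(\mathcal I,(x_n)):=\left\{t \in \{0,1\}^{\mathbb N} \colon \sum_n t(n)x_n \text{ is } \mathcal I\text{-convergent}\right\}$$ is nonmeager in $\{0,1\}^{\mathbb N}$.
   Context: $\mathbb N=\{1,2,\dots\}$. An ideal on $\mathbb N$ is a family $\mathcal I\subset\mathcal P(\mathbb N)$ closed under finite unions and subsets, with $\mathbb N\notin\mathcal I$ and containing all finite subsets of $\mathbb N$. Identifying subsets of $\mathbb N$ with their characteristic functions, $\mathcal I$ is regarded as a subset of the Cantor space $\{0,1\}^{\mathbb N}$ (product topology), and "$\mathcal I$ has the Baire property" refers to this subset. A sequence $(y_n)$ in a normed space is $\mathcal I$-convergent to $y$ if $\{n:\|y_n-y\|>\varepsilon\}\in\mathcal I$ for every $\varepsilon>0$; a series is $\mathcal I$-convergent if its sequence of partial sums is $\mathcal I$-convergent to some element. A series $\sum_n x_n$ is unconditionally convergent if $\sum_n x_{p(n)}$ converges for every permutation $p$ of $\mathbb N$. Banach spaces are over $\mathbb R$. *)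

theory Defs
  imports "HOL-Analysis.Analysis"
begin

(* N = {1,2,...} is relabelled as the HOL type nat = {0,1,2,...} via n |-> n-1. *)

definition is_ideal :: "nat set set \<Rightarrow> bool" where
  "is_ideal I \<longleftrightarrow>
     (\<forall>A\<in>I. \<forall>B\<in>I. A \<union> B \<in> I) \<and>
     (\<forall>A\<in>I. \<forall>B. B \<subseteq> A \<longrightarrow> B \<in> I) \<and>
     UNIV \<notin> I \<and>
     (\<forall>F. finite F \<longrightarrow> F \<in> I)"

definition nowhere_dense :: "'a::topological_space set \<Rightarrow> bool" where
  "nowhere_dense S \<longleftrightarrow> interior (closure S) = {}"

definition meager :: "'a::topological_space set \<Rightarrow> bool" where
  "meager S \<longleftrightarrow> (\<exists>\<F>. countable \<F> \<and> (\<forall>N\<in>\<F>. nowhere_dense N) \<and> S \<subseteq> \<Union>\<F>)"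

definition has_Baire_property :: "'a::topological_space set \<Rightarrow> bool" where
  "has_Baire_property S \<longleftrightarrow> (\<exists>U. open U \<and> meager ((S - U) \<union> (U - S)))"

definition ideal_as_cantor :: "nat set set \<Rightarrow> (nat \<Rightarrow> bool) set" where
  "ideal_as_cantor I = (\<lambda>A. \<lambda>n. n \<in> A) ` I"

definition I_convergent_to :: "nat set set \<Rightarrow> (nat \<Rightarrow> 'a::real_normed_vector) \<Rightarrow> 'a \<Rightarrow> bool" where
  "I_convergent_to I y L \<longleftrightarrow> (\<forall>\<epsilon>>0. {n. norm (y n - L) > \<epsilon>} \<in> I)"

(* series sum_n x_n is I-convergent: partial sums s_n = x_1 + ... + x_n (here x 0 + ... + x n) *)
definition I_convergent_series :: "nat set set \<Rightarrow> (nat \<Rightarrow> 'a::real_normed_vector) \<Rightarrow> bool" where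
  "I_convergent_series I x \<longleftrightarrow> (\<exists>L. I_convergent_to I (\<lambda>n. \<Sum>k\<le>n. x k) L)"

definition unconditionally_convergent :: "(nat \<Rightarrow> 'a::real_normed_vector) \<Rightarrow> bool" where
  "unconditionally_convergent x \<longleftrightarrow> (\<forall>p. bij p \<longrightarrow> summable (\<lambda>n. x (p n)))"

definition A_set :: "nat set set \<Rightarrow> (nat \<Rightarrow> 'a::real_normed_vector) \<Rightarrow> (nat \<Rightarrow> bool) set" where
  "A_set I x = {t. I_convergent_series I (\<lambda>n. (if t n then 1 else 0) *\<^sub>R x n)}"

end

theory Submission
  imports Defs
begin

text \<open>If the series converges unconditionally, the sums of \<open>x\<close> over finite sets of large indices
  are uniformly small, so every subseries converges, hence is \<open>I\<close>-convergent, and the set of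
  selections is the whole Cantor space, which is not meager by the Baire category theorem.

  Conversely, an ideal with the Baire property is meager, and then (Talagrand) there is a partition
  of \<open>\<nat>\<close> into intervals such that no member of the ideal contains infinitely many of them. If the
  sums over finite sets of large indices are not uniformly small, say of norm at least \<open>e\<close>
  infinitely often, then every \<open>I\<close>-convergent selection has, in every interval from some \<open>M\<close> on,
  a partial sum within \<open>e/4\<close> of its limit. For fixed \<open>M\<close> these selections form a nowhere dense
  set, because every cylinder can be extended so that the selected terms between two far-out
  intervals are exactly a finite set with sum of norm at least \<open>e\<close>. So the set of selections
  is meager.\<close>

section \<open>Nowhere dense and meager sets\<close>

lemma nowhere_dense_empty: "nowhere_dense {}"
  by (simp add: nowhere_dense_def)

lemma nowhere_dense_Un:
  assumes "nowhere_dense A" "nowhere_dense B"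
  shows "nowhere_dense (A \<union> B)"
  unfolding nowhere_dense_def
proof -
  let ?U = "interior (closure (A \<union> B))"
  have "?U - closure A \<subseteq> closure B"
    using interior_subset by (fastforce simp: closure_Un)
  then have "?U - closure A \<subseteq> interior (closure B)"
    by (simp add: interior_maximal open_Diff)
  then have "?U \<subseteq> interior (closure A)"
    using assms(2) by (simp add: nowhere_dense_def interior_maximal)
  then show "?U = {}"
    using assms(1) by (simp add: nowhere_dense_def)
qed

lemma nowhere_dense_UN_atMost:
  fixes N :: "nat \<Rightarrow> 'a::topological_space set"
  shows "(\<And>k. nowhere_dense (N k)) \<Longrightarrow> nowhere_dense (\<Union>k\<le>j. N k)"
  by (induction j) (simp_all add: atMost_Suc nowhere_dense_Un)

lemma meager_iff_nowhere_dense_seq: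
  "meager S \<longleftrightarrow> (\<exists>N::nat \<Rightarrow> _ set. (\<forall>k. nowhere_dense (N k)) \<and> S \<subseteq> (\<Union>k. N k))"
proof
  assume "meager S"
  then obtain \<F> where \<F>: "countable \<F>" "\<forall>N\<in>\<F>. nowhere_dense N" "S \<subseteq> \<Union>\<F>"
    unfolding meager_def by blast
  show "\<exists>N::nat \<Rightarrow> _ set. (\<forall>k. nowhere_dense (N k)) \<and> S \<subseteq> (\<Union>k. N k)"
  proof (cases "\<F> = {}")
    case True
    then show ?thesis
      using \<F>(3) nowhere_dense_empty by (intro exI[of _ "\<lambda>_. {}"]) auto
  next
    case False
    then have "from_nat_into \<F> k \<in> \<F>" for k
      by (rule from_nat_into)
    then show ?thesis
      using \<F> False by (intro exI[of _ "from_nat_into \<F>"]) (auto simp: range_from_nat_into)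
  qed
next
  assume "\<exists>N::nat \<Rightarrow> _ set. (\<forall>k. nowhere_dense (N k)) \<and> S \<subseteq> (\<Union>k. N k)"
  then obtain N :: "nat \<Rightarrow> _ set" where "\<forall>k. nowhere_dense (N k)" "S \<subseteq> (\<Union>k. N k)"
    by blast
  moreover have "countable (range N)"
    by simp
  ultimately show "meager S"
    unfolding meager_def by blast
qed

lemma meager_subset: "meager A \<Longrightarrow> B \<subseteq> A \<Longrightarrow> meager B"
  unfolding meager_def by (meson order_trans)

lemma meager_Un:
  assumes "meager A" "meager B"
  shows "meager (A \<union> B)"
proof -
  obtain \<F> \<G> where \<F>: "countable \<F>" "\<forall>N\<in>\<F>. nowhere_dense N" "A \<subseteq> \<Union>\<F>"
    and \<G>: "countable \<G>" "\<forall>N\<in>\<G>. nowhere_dense N" "B \<subseteq> \<Union>\<G>"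
    using assms unfolding meager_def by blast
  have "countable (\<F> \<union> \<G>)"
    using \<F>(1) \<G>(1) by simp
  moreover have "\<forall>N\<in>\<F> \<union> \<G>. nowhere_dense N" "A \<union> B \<subseteq> \<Union>(\<F> \<union> \<G>)"
    using \<F>(2,3) \<G>(2,3) by blast+
  ultimately show ?thesis
    unfolding meager_def by blast
qed

lemma Baire_open_not_meager:
  fixes U :: "'a::topological_space set"
  assumes "compact_space (euclidean :: 'a topology)" "Hausdorff_space (euclidean :: 'a topology)"
    and "open U" "U \<noteq> {}"
  shows "\<not> meager U"
proof
  assume "meager U"
  then obtain \<F> where \<F>: "countable \<F>" "\<forall>N\<in>\<F>. nowhere_dense N" "U \<subseteq> \<Union>\<F>"
    unfolding meager_def by blast
  have "U \<subseteq> \<Union>(closure ` \<F>)"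
    using \<F>(3) closure_subset by blast
  then have "U \<subseteq> interior (\<Union>(closure ` \<F>))"
    using assms(3) by (rule interior_maximal)
  moreover have "euclidean interior_of \<Union>(closure ` \<F>) = {}"
  proof (rule Baire_category_alt)
    show "completely_metrizable_space (euclidean :: 'a topology) \<or>
        locally_compact_space (euclidean :: 'a topology) \<and> regular_space (euclidean :: 'a topology)"
      by (simp add: assms(1,2) compact_imp_locally_compact_space compact_Hausdorff_imp_regular_space)
    show "countable (closure ` \<F>)"
      using \<F>(1) by simp
    fix T
    assume "T \<in> closure ` \<F>"
    then obtain N where "N \<in> \<F>" "T = closure N"
      by blast
    then show "closedin euclidean T \<and> euclidean interior_of T = {}"
      using \<F>(2) by (simp add: nowhere_dense_def)
  qed
  ultimately show False
    using assms(4) by simp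
qed

section \<open>The Cantor space\<close>

lemma compact_space_cantor: "compact_space (euclidean :: (nat \<Rightarrow> bool) topology)"
proof -
  have "compact_space (euclidean :: bool topology)"
    by (simp add: compact_space_def finite_imp_compact)
  then have "compact_space (product_topology (\<lambda>_::nat. euclidean :: bool topology) UNIV)"
    by (simp add: compact_space_product_topology)
  then show ?thesis
    by (simp only: euclidean_product_topology)
qed

lemma Hausdorff_space_euclidean_t2: "Hausdorff_space (euclidean :: 'a::t2_space topology)"
  by (metis Hausdorff_space_def disjnt_def open_openin separation_t2)

lemma Hausdorff_space_cantor: "Hausdorff_space (euclidean :: (nat \<Rightarrow> bool) topology)"
proof -
  have "Hausdorff_space (product_topology (\<lambda>_::nat. euclidean :: bool topology) UNIV)"
    by (simp add: Hausdorff_space_product_topology Hausdorff_space_euclidean_t2)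
  then show ?thesis
    by (simp only: euclidean_product_topology)
qed

lemma cantor_open_not_meager: "open U \<Longrightarrow> U \<noteq> {} \<Longrightarrow> \<not> meager (U :: (nat \<Rightarrow> bool) set)"
  by (rule Baire_open_not_meager[OF compact_space_cantor Hausdorff_space_cantor])

definition cylinder :: "(nat \<Rightarrow> bool) \<Rightarrow> nat \<Rightarrow> (nat \<Rightarrow> bool) set" where
  "cylinder v m = {t. \<forall>i<m. t i = v i}"

lemma cylinder_self [simp]: "v \<in> cylinder v m"
  by (simp add: cylinder_def)

lemma cylinder_antimono: "m \<le> m' \<Longrightarrow> \<forall>i<m. v' i = v i \<Longrightarrow> cylinder v' m' \<subseteq> cylinder v m"
  by (auto simp: cylinder_def)

lemma open_cylinder: "open (cylinder v m)"
proof -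
  have "cylinder v m = {t. \<forall>i\<in>{..<m}. t (id i) \<in> {v i}}"
    by (auto simp: cylinder_def)
  moreover have "open {t. \<forall>i\<in>{..<m}. t (id i) \<in> {v i}}"
    by (rule product_topology_basis') (auto intro: open_discrete)
  ultimately show ?thesis
    by simp
qed

lemma open_contains_cylinder:
  assumes "open U" "v \<in> U"
  obtains m where "cylinder v m \<subseteq> U"
proof -
  have "openin (product_topology (\<lambda>i. euclidean) UNIV) U"
    using assms(1) by (simp add: open_fun_def)
  then obtain X where X: "Pi\<^sub>E UNIV X \<subseteq> U" "finite {i. X i \<noteq> topspace euclidean}" "v \<in> Pi\<^sub>E UNIV X"
    using product_topology_open_contains_basis[OF _ assms(2)] by blast
  obtain m where m: "\<forall>i\<in>{i. X i \<noteq> topspace euclidean}. i < m"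
    using X(2) finite_nat_set_iff_bounded by blast
  have "cylinder v m \<subseteq> Pi\<^sub>E UNIV X"
  proof
    fix t
    assume t: "t \<in> cylinder v m"
    have "t i \<in> X i" for i
    proof (cases "X i = topspace euclidean")
      case False
      then have "t i = v i"
        using m t by (simp add: cylinder_def)
      then show ?thesis
        using X(3) by (simp add: PiE_iff)
    qed simp
    then show "t \<in> Pi\<^sub>E UNIV X"
      by (simp add: PiE_iff)
  qed
  then have "cylinder v m \<subseteq> U"
    using X(1) by (rule order_trans)
  then show thesis
    by (rule that)
qed

lemma nowhere_dense_cantorE:
  assumes C: "nowhere_dense C"
  obtains v' m' where "m < m'" "\<forall>i<m. v' i = v i" "cylinder v' m' \<inter> C = {}"
proof -
  have "\<not> cylinder v m \<subseteq> closure C"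
  proof
    assume "cylinder v m \<subseteq> closure C"
    then have "cylinder v m \<subseteq> interior (closure C)"
      using open_cylinder by (rule interior_maximal)
    then show False
      using C cylinder_self[of v m] unfolding nowhere_dense_def by auto
  qed
  then obtain q where q: "q \<in> cylinder v m" "q \<notin> closure C"
    by (meson subsetI)
  moreover have "open (cylinder v m - closure C)"
    by (simp add: open_Diff open_cylinder)
  ultimately obtain m0 where m0: "cylinder q m0 \<subseteq> cylinder v m - closure C"
    by (meson DiffI open_contains_cylinder)
  have "cylinder q (max m0 (Suc m)) \<subseteq> cylinder q m0"
    by (rule cylinder_antimono) auto
  then have "cylinder q (max m0 (Suc m)) \<inter> C = {}"
    using m0 closure_subset[of C] by auto
  moreover have "\<forall>i<m. q i = v i"
    using q by (simp add: cylinder_def)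
  moreover have "m < max m0 (Suc m)"
    by simp
  ultimately show thesis
    using that by blast
qed

lemma nowhere_dense_cantorI:
  assumes C: "\<And>v m. \<exists>v' m'. m < m' \<and> (\<forall>i<m. v' i = v i) \<and> cylinder v' m' \<inter> C = {}"
  shows "nowhere_dense C"
  unfolding nowhere_dense_def
proof (rule ccontr)
  assume "interior (closure C) \<noteq> {}"
  then obtain q where "q \<in> interior (closure C)"
    by auto
  then obtain m where m: "cylinder q m \<subseteq> interior (closure C)"
    by (rule open_contains_cylinder[OF open_interior])
  obtain v' m' where v': "m < m'" "\<forall>i<m. v' i = q i" "cylinder v' m' \<inter> C = {}"
    using C[of m q] by blast
  have "cylinder v' m' \<subseteq> closure C"
    using cylinder_antimono[of m m' v' q] v' m interior_subset[of "closure C"] by auto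
  moreover have "cylinder v' m' \<inter> closure C = {}"
    using open_Int_closure_eq_empty[OF open_cylinder] v'(3) by auto
  ultimately show False
    by (metis cylinder_self disjoint_iff subsetD)
qed

lemma nowhere_dense_avoid_finite_prefixes:
  assumes D: "nowhere_dense D" and S: "finite S"
  shows "\<exists>m>n. \<exists>w. \<forall>u\<in>S. cylinder (\<lambda>i. if i < n then u i else w i) m \<inter> D = {}"
  using S
proof induction
  case empty
  show ?case
    by (intro exI[of _ "Suc n"]) auto
next
  case (insert u S)
  then obtain m w where mw: "n < m" "\<forall>u\<in>S. cylinder (\<lambda>i. if i < n then u i else w i) m \<inter> D = {}"
    by blast
  obtain w' m' where w': "m < m'" "\<forall>i<m. w' i = (if i < n then u i else w i)" "cylinder w' m' \<inter> D = {}"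
    using D by (rule nowhere_dense_cantorE)
  have "cylinder (\<lambda>i. if i < n then u' i else w' i) m' \<inter> D = {}" if "u' \<in> insert u S" for u'
  proof (cases "u' = u")
    case True
    have "cylinder (\<lambda>i. if i < n then u' i else w' i) m' \<subseteq> cylinder w' m'"
      using True w' mw(1) by (intro cylinder_antimono) auto
    then show ?thesis
      using w'(3) by (meson disjoint_iff subsetD)
  next
    case False
    have "cylinder (\<lambda>i. if i < n then u' i else w' i) m' \<subseteq> cylinder (\<lambda>i. if i < n then u' i else w i) m"
      using w' by (intro cylinder_antimono) auto
    moreover have "u' \<in> S"
      using False that by simp
    ultimately show ?thesis
      using mw(2) by (meson disjoint_iff subsetD)
  qed
  then show ?case
    using mw(1) w'(1) by (intro exI[of _ m'] conjI exI[of _ w']) auto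
qed

lemma nowhere_dense_block_pattern:
  fixes D :: "(nat \<Rightarrow> bool) set"
  assumes "nowhere_dense D"
  obtains m w where "n < m" "\<And>s. s \<in> D \<Longrightarrow> \<exists>i\<in>{n..<m}. s i \<noteq> w i"
proof -
  define S where "S = {u :: nat \<Rightarrow> bool. \<forall>i\<ge>n. \<not> u i}"
  have "S \<subseteq> (\<lambda>A i. i \<in> A) ` Pow {..<n}"
  proof
    fix u
    assume "u \<in> S"
    then have "u = (\<lambda>i. i \<in> {i. u i})" "{i. u i} \<in> Pow {..<n}"
      by (auto simp: S_def not_less[symmetric])
    then show "u \<in> (\<lambda>A i. i \<in> A) ` Pow {..<n}"
      by blast
  qed
  then have "finite S"
    by (rule finite_subset) simp
  then obtain m w where mw: "n < m" "\<forall>u\<in>S. cylinder (\<lambda>i. if i < n then u i else w i) m \<inter> D = {}"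
    using nowhere_dense_avoid_finite_prefixes[OF assms] by blast
  have "\<exists>i\<in>{n..<m}. s i \<noteq> w i" if s: "s \<in> D" for s
  proof (rule ccontr)
    assume "\<not> (\<exists>i\<in>{n..<m}. s i \<noteq> w i)"
    then have "s \<in> cylinder (\<lambda>i. if i < n then (i < n \<and> s i) else w i) m"
      by (auto simp: cylinder_def)
    moreover have "(\<lambda>i. i < n \<and> s i) \<in> S"
      by (simp add: S_def)
    then have "cylinder (\<lambda>i. if i < n then (i < n \<and> s i) else w i) m \<inter> D = {}"
      by (rule mw(2)[rule_format])
    ultimately show False
      using s by (meson disjoint_iff)
  qed
  with mw(1) show thesis
    by (rule that)
qed

lemma meager_cantor_blocks:
  fixes X :: "(nat \<Rightarrow> bool) set"
  assumes "meager X"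
  obtains nn :: "nat \<Rightarrow> nat" and w where "strict_mono nn"
    "\<And>t. t \<in> X \<Longrightarrow> \<forall>\<^sub>F j in sequentially. \<exists>i\<in>{nn j..<nn (Suc j)}. t i \<noteq> w j i"
proof -
  obtain N :: "nat \<Rightarrow> (nat \<Rightarrow> bool) set" where N: "\<And>k. nowhere_dense (N k)" "X \<subseteq> (\<Union>k. N k)"
    using assms unfolding meager_iff_nowhere_dense_seq by blast
  define D where "D j = (\<Union>k\<le>j. N k)" for j
  have "\<forall>j. \<forall>n. \<exists>p. n < fst p \<and> (\<forall>s\<in>D j. \<exists>i\<in>{n..<fst p}. s i \<noteq> snd p i)"
  proof (intro allI)
    fix j n
    have "nowhere_dense (D j)"
      unfolding D_def using N(1) by (rule nowhere_dense_UN_atMost)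
    then obtain m w where "n < m" "\<And>s. s \<in> D j \<Longrightarrow> \<exists>i\<in>{n..<m}. s i \<noteq> w i"
      by (rule nowhere_dense_block_pattern[where n = n]) blast
    then show "\<exists>p. n < fst p \<and> (\<forall>s\<in>D j. \<exists>i\<in>{n..<fst p}. s i \<noteq> snd p i)"
      by (intro exI[of _ "(m, w)"]) simp
  qed
  then obtain G where G: "\<And>j n. n < fst (G j n)"
    "\<And>j n s. s \<in> D j \<Longrightarrow> \<exists>i\<in>{n..<fst (G j n)}. s i \<noteq> snd (G j n) i"
    unfolding choice_iff by blast
  define nn where "nn = rec_nat 0 (\<lambda>j n. fst (G j n))"
  have nn_Suc: "nn (Suc j) = fst (G j (nn j))" for j
    by (simp add: nn_def)
  define w where "w j = snd (G j (nn j))" for j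
  have "strict_mono nn"
    unfolding strict_mono_Suc_iff using G(1) by (simp add: nn_Suc)
  moreover have "\<forall>\<^sub>F j in sequentially. \<exists>i\<in>{nn j..<nn (Suc j)}. t i \<noteq> w j i" if t: "t \<in> X" for t
  proof -
    obtain k where "t \<in> N k"
      using N(2) t by blast
    then have "t \<in> D j" if "k \<le> j" for j
      using that unfolding D_def by blast
    then have "\<exists>i\<in>{nn j..<nn (Suc j)}. t i \<noteq> w j i" if "k \<le> j" for j
      unfolding nn_Suc w_def using G(2) that by blast
    then show ?thesis
      unfolding eventually_sequentially by blast
  qed
  ultimately show thesis
    by (rule that)
qed

section \<open>Meager ideals\<close>

lemma ideal_Un: "is_ideal I \<Longrightarrow> A \<in> I \<Longrightarrow> B \<in> I \<Longrightarrow> A \<union> B \<in> I"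
  by (simp add: is_ideal_def)

lemma ideal_subset: "is_ideal I \<Longrightarrow> A \<in> I \<Longrightarrow> B \<subseteq> A \<Longrightarrow> B \<in> I"
  by (simp add: is_ideal_def)

lemma ideal_finite: "is_ideal I \<Longrightarrow> finite F \<Longrightarrow> F \<in> I"
  by (simp add: is_ideal_def)

lemma ideal_UNIV: "is_ideal I \<Longrightarrow> UNIV \<notin> I"
  by (simp add: is_ideal_def)

definition flip_from :: "nat \<Rightarrow> (nat \<Rightarrow> bool) \<Rightarrow> nat \<Rightarrow> bool" where
  "flip_from m t = (\<lambda>i. if i < m then t i else \<not> t i)"

lemma flip_from_flip_from [simp]: "flip_from m (flip_from m t) = t"
  by (auto simp: flip_from_def)

lemma nowhere_dense_flip_from:
  assumes "nowhere_dense C"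
  shows "nowhere_dense (flip_from m -` C)"
proof (rule nowhere_dense_cantorI)
  fix v k
  obtain v' k' where v': "k < k'" "\<forall>i<k. v' i = flip_from m v i" "cylinder v' k' \<inter> C = {}"
    using assms by (rule nowhere_dense_cantorE)
  have "flip_from m ` cylinder (flip_from m v') k' \<subseteq> cylinder v' k'"
    by (auto simp: cylinder_def flip_from_def)
  then have "cylinder (flip_from m v') k' \<inter> flip_from m -` C = {}"
    using v'(3) by auto
  moreover have "\<forall>i<k. flip_from m v' i = v i"
    using v'(2) by (auto simp: flip_from_def)
  ultimately show "\<exists>v' k'. k < k' \<and> (\<forall>i<k. v' i = v i) \<and> cylinder v' k' \<inter> flip_from m -` C = {}"
    using v'(1) by blast
qed

lemma meager_flip_from:
  assumes "meager X"
  shows "meager (flip_from m -` X)"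
proof -
  obtain N :: "nat \<Rightarrow> (nat \<Rightarrow> bool) set" where N: "\<forall>k. nowhere_dense (N k)" "X \<subseteq> (\<Union>k. N k)"
    using assms unfolding meager_iff_nowhere_dense_seq by auto
  have "\<forall>k. nowhere_dense (flip_from m -` N k)"
    using N(1) by (simp add: nowhere_dense_flip_from)
  moreover have "flip_from m -` X \<subseteq> (\<Union>k. flip_from m -` N k)"
    using N(2) by (auto simp: subset_eq)
  ultimately show ?thesis
    unfolding meager_iff_nowhere_dense_seq by (intro exI[of _ "\<lambda>k. flip_from m -` N k"] conjI)
qed

lemma ideal_as_cantor_flip_from:
  assumes I: "is_ideal I" and t: "t \<in> ideal_as_cantor I"
  shows "flip_from m t \<notin> ideal_as_cantor I"
proof
  assume "flip_from m t \<in> ideal_as_cantor I"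
  with t obtain A B where AB: "A \<in> I" "B \<in> I" "t = (\<lambda>n. n \<in> A)" "flip_from m t = (\<lambda>n. n \<in> B)"
    unfolding ideal_as_cantor_def by auto
  have "i \<in> A \<or> i \<in> B" if "\<not> i < m" for i
    using that fun_cong[OF AB(3), of i] fun_cong[OF AB(4), of i] by (auto simp: flip_from_def)
  then have "A \<union> B \<union> {..<m} = UNIV"
    by auto
  moreover have "A \<union> B \<union> {..<m} \<in> I"
    using I AB(1,2) by (simp add: ideal_Un ideal_finite)
  ultimately show False
    using I by (simp add: ideal_UNIV)
qed

text \<open>Otherwise the ideal is comeager in some cylinder. The cylinder is invariant under flipping
  all coordinates beyond its length, so it contains some \<open>A\<close> such that both \<open>A\<close> and its
  complement beyond that length are in the ideal.\<close>

lemma ideal_meager: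
  assumes I: "is_ideal I" and Baire: "has_Baire_property (ideal_as_cantor I)"
  shows "meager (ideal_as_cantor I)"
proof (rule ccontr)
  define J where "J = ideal_as_cantor I"
  assume not_meager: "\<not> meager (ideal_as_cantor I)"
  obtain U where U: "open U" and M: "meager ((J - U) \<union> (U - J))"
    using Baire unfolding has_Baire_property_def J_def by blast
  have "U \<noteq> {}"
  proof
    assume "U = {}"
    then have "meager J"
      using meager_subset[OF M] by simp
    with not_meager show False
      by (simp add: J_def)
  qed
  then obtain p where "p \<in> U"
    by auto
  with U obtain m where m: "cylinder p m \<subseteq> U"
    by (rule open_contains_cylinder)
  define M' where "M' = ((J - U) \<union> (U - J)) \<union> flip_from m -` ((J - U) \<union> (U - J))"
  have "meager M'"
    unfolding M'_def by (rule meager_Un[OF M meager_flip_from[OF M]])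
  have "\<not> cylinder p m \<subseteq> M'"
  proof
    assume "cylinder p m \<subseteq> M'"
    with \<open>meager M'\<close> have "meager (cylinder p m)"
      by (rule meager_subset)
    then show False
      using cantor_open_not_meager[OF open_cylinder, of p m] by (metis cylinder_self empty_iff)
  qed
  then obtain t where t: "t \<in> cylinder p m" "t \<notin> M'"
    by (meson subsetI)
  have "flip_from m t \<in> cylinder p m"
    using t(1) by (simp add: cylinder_def flip_from_def)
  then have "t \<in> J" "flip_from m t \<in> J"
    using t m unfolding M'_def by auto
  then show False
    using ideal_as_cantor_flip_from[OF I] unfolding J_def by blast
qed

lemma mono_intervals_disjoint:
  assumes "mono (nn :: nat \<Rightarrow> nat)" "i \<in> {nn j..<nn (Suc j)}" "i \<in> {nn j'..<nn (Suc j')}"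
  shows "j = j'"
proof (rule ccontr)
  assume "j \<noteq> j'"
  then have "Suc j \<le> j' \<or> Suc j' \<le> j"
    by linarith
  then have "nn (Suc j) \<le> nn j' \<or> nn (Suc j') \<le> nn j"
    using assms(1) by (auto dest: monoD)
  then show False
    using assms(2,3) by auto
qed

lemma hereditary_finitely_many_blocks:
  assumes hereditary: "\<And>A B. A \<in> I \<Longrightarrow> B \<subseteq> A \<Longrightarrow> B \<in> I"
    and nn: "mono (nn :: nat \<Rightarrow> nat)"
    and differs: "\<And>t. t \<in> ideal_as_cantor I \<Longrightarrow>
      \<forall>\<^sub>F j in sequentially. \<exists>i\<in>{nn j..<nn (Suc j)}. t i \<noteq> w j i"
    and A: "A \<in> I"
  shows "finite {j. {nn j..<nn (Suc j)} \<subseteq> A}"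
proof (rule ccontr)
  define J where "J = {j. {nn j..<nn (Suc j)} \<subseteq> A}"
  assume "infinite {j. {nn j..<nn (Suc j)} \<subseteq> A}"
  then have "infinite J"
    by (simp add: J_def)
  define A' where "A' = {i. \<exists>j\<in>J. i \<in> {nn j..<nn (Suc j)} \<and> w j i}"
  have "A' \<subseteq> A"
    unfolding A'_def J_def by auto
  then have "A' \<in> I"
    by (rule hereditary[OF A])
  then have "(\<lambda>i. i \<in> A') \<in> ideal_as_cantor I"
    unfolding ideal_as_cantor_def by (rule rev_image_eqI) simp
  then obtain k where k: "\<forall>j\<ge>k. \<exists>i\<in>{nn j..<nn (Suc j)}. (i \<in> A') \<noteq> w j i"
    using differs unfolding eventually_sequentially by blast
  obtain j where j: "j \<in> J" "k \<le> j"
    using \<open>infinite J\<close> by (meson infinite_nat_iff_unbounded_le)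
  obtain i where i: "i \<in> {nn j..<nn (Suc j)}" "(i \<in> A') \<noteq> w j i"
    using k[rule_format, OF j(2)] by blast
  have "i \<in> A' \<longleftrightarrow> w j i"
  proof
    assume "i \<in> A'"
    then obtain j' where "i \<in> {nn j'..<nn (Suc j')}" "w j' i"
      unfolding A'_def by auto
    moreover have "j = j'"
      using mono_intervals_disjoint[OF nn i(1)] calculation(1) .
    ultimately show "w j i"
      by simp
  next
    assume "w j i"
    then show "i \<in> A'"
      using i(1) j(1) unfolding A'_def by auto
  qed
  then show False
    using i(2) by simp
qed

text \<open>One direction of Talagrand's characterisation of meager ideals.\<close>

lemma meager_hereditary_interval_partition:
  assumes hereditary: "\<And>A B. A \<in> I \<Longrightarrow> B \<subseteq> A \<Longrightarrow> B \<in> I"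
    and meager: "meager (ideal_as_cantor I)"
  obtains nn :: "nat \<Rightarrow> nat" where "strict_mono nn"
    "\<forall>A\<in>I. finite {j. {nn j..<nn (Suc j)} \<subseteq> A}"
proof -
  obtain nn w where nn: "strict_mono (nn :: nat \<Rightarrow> nat)"
    and differs: "\<And>t. t \<in> ideal_as_cantor I \<Longrightarrow>
      \<forall>\<^sub>F j in sequentially. \<exists>i\<in>{nn j..<nn (Suc j)}. t i \<noteq> w j i"
    using meager by (rule meager_cantor_blocks) blast
  have "finite {j. {nn j..<nn (Suc j)} \<subseteq> A}" if "A \<in> I" for A
    using hereditary_finitely_many_blocks[where w = w, OF hereditary strict_mono_mono[OF nn] differs that] .
  then have "\<forall>A\<in>I. finite {j. {nn j..<nn (Suc j)} \<subseteq> A}"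
    by blast
  with nn show thesis
    using that by blast
qed

section \<open>Unconditional convergence\<close>

definition unconditionally_Cauchy :: "(nat \<Rightarrow> 'a::real_normed_vector) \<Rightarrow> bool" where
  "unconditionally_Cauchy x \<longleftrightarrow>
     (\<forall>e>0. \<exists>N. \<forall>F. finite F \<and> F \<subseteq> {N..} \<longrightarrow> norm (sum x F) < e)"

lemma unconditionally_CauchyD:
  "unconditionally_Cauchy x \<Longrightarrow> e > 0 \<Longrightarrow> \<exists>N. \<forall>F. finite F \<and> F \<subseteq> {N..} \<longrightarrow> norm (sum x F) < e"
  by (simp add: unconditionally_Cauchy_def)

lemma not_unconditionally_Cauchy:
  "\<not> unconditionally_Cauchy x \<longleftrightarrow> (\<exists>e>0. \<forall>N. \<exists>F. finite F \<and> F \<subseteq> {N..} \<and> e \<le> norm (sum x F))"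
  by (auto simp: unconditionally_Cauchy_def not_less)

lemma unconditionally_Cauchy_summable_reindex:
  fixes x :: "nat \<Rightarrow> 'a::banach"
  assumes x: "unconditionally_Cauchy x" and p: "inj p"
  shows "summable (\<lambda>n. x (p n))"
  unfolding summable_Cauchy
proof (intro allI impI)
  fix e :: real
  assume "e > 0"
  then obtain N where N: "\<And>F. finite F \<Longrightarrow> F \<subseteq> {N..} \<Longrightarrow> norm (sum x F) < e"
    using unconditionally_CauchyD[OF x] by meson
  have "finite (p -` {..<N})"
    using p by (simp add: finite_vimageI)
  then obtain M where M: "\<forall>i\<in>p -` {..<N}. i < M"
    using finite_nat_set_iff_bounded by blast
  have "norm (\<Sum>i=m..<n. x (p i)) < e" if "M \<le> m" for m n
  proof -
    have "(\<Sum>i=m..<n. x (p i)) = sum x (p ` {m..<n})"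
      using sum.reindex[OF inj_on_subset[OF p subset_UNIV], of x "{m..<n}"] by (simp add: comp_def)
    moreover have "p ` {m..<n} \<subseteq> {N..}"
    proof (rule image_subsetI)
      fix i
      assume "i \<in> {m..<n}"
      then have "\<not> i < M"
        using that by simp
      then have "i \<notin> p -` {..<N}"
        using M by blast
      then show "p i \<in> {N..}"
        by simp
    qed
    ultimately show ?thesis
      using N by simp
  qed
  then show "\<exists>M. \<forall>m\<ge>M. \<forall>n. norm (\<Sum>i=m..<n. x (p i)) < e"
    by blast
qed

lemma unconditionally_Cauchy_summable_restrict:
  fixes x :: "nat \<Rightarrow> 'a::banach"
  assumes x: "unconditionally_Cauchy x"
  shows "summable (\<lambda>n. if P n then x n else 0)"
  unfolding summable_Cauchy
proof (intro allI impI)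
  fix e :: real
  assume "e > 0"
  then obtain N where N: "\<And>F. finite F \<Longrightarrow> F \<subseteq> {N..} \<Longrightarrow> norm (sum x F) < e"
    using unconditionally_CauchyD[OF x] by meson
  have "norm (\<Sum>i=m..<n. if P i then x i else 0) < e" if "N \<le> m" for m n
  proof -
    have "(\<Sum>i=m..<n. if P i then x i else 0) = sum x {i\<in>{m..<n}. P i}"
      by (rule sum.inter_filter[symmetric]) simp
    moreover have "{i\<in>{m..<n}. P i} \<subseteq> {N..}"
      using that by auto
    ultimately show ?thesis
      using N by simp
  qed
  then show "\<exists>N. \<forall>m\<ge>N. \<forall>n. norm (\<Sum>i=m..<n. if P i then x i else 0) < e"
    by blast
qed

lemma bij_exchanging_families:
  assumes fin: "\<And>j. finite (F j)" "\<And>j. finite (R j)"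
    and card: "\<And>j. card (R j) = card (F j)"
    and disj: "disjoint_family F" "disjoint_family R" "\<And>j j'. F j \<inter> R j' = {}"
  shows "\<exists>p :: nat \<Rightarrow> nat. bij p \<and> (\<forall>j. p ` R j = F j)"
proof -
  have "\<forall>j. \<exists>g. bij_betw g (F j) (R j)"
    using finite_same_card_bij[OF fin(1) fin(2)] card by metis
  then obtain g where g: "\<And>j. bij_betw (g j) (F j) (R j)"
    by (metis choice)
  define h where "h j = inv_into (F j) (g j)" for j
  have h: "bij_betw (h j) (R j) (F j)" for j
    unfolding h_def using g by (rule bij_betw_inv_into)
  define p where "p i = (if \<exists>j. i \<in> F j then g (THE j. i \<in> F j) i
                          else if \<exists>j. i \<in> R j then h (THE j. i \<in> R j) i else i)" for i
  have p_F: "p i = g j i" if "i \<in> F j" for i j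
  proof -
    have "(THE j. i \<in> F j) = j"
      using disj(1) that unfolding disjoint_family_on_def by blast
    then show ?thesis
      using that by (auto simp: p_def)
  qed
  have p_R: "p i = h j i" if "i \<in> R j" for i j
  proof -
    have "(THE j. i \<in> R j) = j"
      using disj(2) that unfolding disjoint_family_on_def by blast
    then show ?thesis
      using that disj(3) by (auto simp: p_def)
  qed
  have "p (p i) = i" for i
  proof (cases "\<exists>j. i \<in> F j \<union> R j")
    case True
    then obtain j where "i \<in> F j \<or> i \<in> R j"
      by blast
    then show ?thesis
      using bij_betw_apply[OF g[of j], of i] bij_betw_apply[OF h[of j], of i] p_F[of _ j] p_R[of _ j]
        bij_betw_inv_into_left[OF g[of j], of i] bij_betw_inv_into_right[OF g[of j], of i]
      by (auto simp: h_def)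
  qed (simp add: p_def)
  then have "bij p"
    by (rule involuntory_imp_bij)
  moreover have "p ` R j = F j" for j
    using h[of j] p_R by (simp add: bij_betw_def cong: image_cong)
  ultimately show ?thesis
    by blast
qed

text \<open>The gap \<open>{b j..<a (Suc j)}\<close> after \<open>F j\<close> has the size of \<open>F j\<close>, so that a permutation
  can move \<open>F j\<close> onto it and turn the sum over \<open>F j\<close> into a block of consecutive terms.\<close>

lemma not_unconditionally_Cauchy_blocks:
  assumes "\<not> unconditionally_Cauchy x"
  obtains e :: real and F and a b :: "nat \<Rightarrow> nat" where "e > 0"
    "\<And>j. finite (F j)" "\<And>j. F j \<subseteq> {a j..<b j}" "\<And>j. a j < b j"
    "\<And>j. a (Suc j) = b j + card (F j)" "\<And>j. e \<le> norm (sum x (F j))"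
proof -
  obtain e where e: "e > 0" "\<forall>N. \<exists>F. finite F \<and> F \<subseteq> {N..} \<and> e \<le> norm (sum x F)"
    using assms unfolding not_unconditionally_Cauchy by blast
  then obtain G where G: "\<And>N. finite (G N)" "\<And>N. G N \<subseteq> {N..}" "\<And>N. e \<le> norm (sum x (G N))"
    by metis
  define a where "a = rec_nat 0 (\<lambda>_ n. Max (G n) + 1 + card (G n))"
  define F where "F j = G (a j)" for j
  define b where "b j = Max (F j) + 1" for j
  have fin: "finite (F j)" and norm: "e \<le> norm (sum x (F j))" for j
    using G(1,3) by (simp_all add: F_def)
  have nonempty: "F j \<noteq> {}" for j
    using norm[of j] e(1) by auto
  then have sub: "F j \<subseteq> {a j..<b j}" for j
    using fin G(2)[of "a j"] by (auto simp: F_def b_def less_Suc_eq_le)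
  have less: "a j < b j" for j
    using nonempty[of j] sub[of j] by fastforce
  have a_Suc: "a (Suc j) = b j + card (F j)" for j
    by (simp add: a_def b_def F_def)
  show thesis
    by (rule that[where e = e and F = F and a = a and b = b, OF e(1) fin sub less a_Suc norm])
qed

lemma disjoint_families_between_intervals:
  fixes a b :: "nat \<Rightarrow> nat"
  assumes F: "\<And>j. F j \<subseteq> {a j..<b j}"
    and ab: "\<And>j. a j \<le> b j" "\<And>j. b j \<le> a (Suc j)"
  shows "disjoint_family F" "disjoint_family (\<lambda>j. {b j..<a (Suc j)})"
    "\<And>j j'. F j \<inter> {b j'..<a (Suc j')} = {}"
proof -
  have "mono a"
    unfolding mono_iff_le_Suc using ab order_trans by blast
  then have same_block: "j = j'" if "i \<in> {a j..<a (Suc j)}" "i \<in> {a j'..<a (Suc j')}" for i j j'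
    using that by (rule mono_intervals_disjoint)
  have F_block: "F j \<subseteq> {a j..<a (Suc j)}" for j
    using F[of j] ab(2)[of j] by auto
  have R_block: "{b j..<a (Suc j)} \<subseteq> {a j..<a (Suc j)}" for j
    using ab(1)[of j] by auto
  show "disjoint_family F"
    unfolding disjoint_family_on_def using same_block F_block by blast
  show "disjoint_family (\<lambda>j. {b j..<a (Suc j)})"
    unfolding disjoint_family_on_def using same_block R_block by blast
  show "F j \<inter> {b j'..<a (Suc j')} = {}" for j j'
  proof -
    have "j = j'" if "i \<in> F j" "i \<in> {b j'..<a (Suc j')}" for i
      using same_block F_block R_block that by blast
    moreover have "F j \<inter> {b j..<a (Suc j)} = {}"
      using F[of j] by auto
    ultimately show ?thesis
      by blast
  qed
qed

lemma unconditionally_convergent_imp_Cauchy: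
  fixes x :: "nat \<Rightarrow> 'a::banach"
  assumes "unconditionally_convergent x"
  shows "unconditionally_Cauchy x"
proof (rule ccontr)
  assume "\<not> unconditionally_Cauchy x"
  then obtain e :: real and F and a b :: "nat \<Rightarrow> nat" where e: "e > 0"
    and F: "\<And>j. finite (F j)" "\<And>j. F j \<subseteq> {a j..<b j}"
    and ab: "\<And>j. a j < b j" "\<And>j. a (Suc j) = b j + card (F j)"
    and norm: "\<And>j. e \<le> norm (sum x (F j))"
    by (rule not_unconditionally_Cauchy_blocks) blast
  define R where "R j = {b j..<a (Suc j)}" for j
  have "\<exists>p :: nat \<Rightarrow> nat. bij p \<and> (\<forall>j. p ` R j = F j)"
  proof (rule bij_exchanging_families)
    show "finite (R j)" "card (R j) = card (F j)" for j
      by (simp_all add: R_def ab(2))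
    have "a j \<le> b j" "b j \<le> a (Suc j)" for j
      using ab[of j] by simp_all
    then show "disjoint_family F" "disjoint_family R" "F j \<inter> R j' = {}" for j j'
      unfolding R_def by (rule disjoint_families_between_intervals[OF F(2)])+
  qed (rule F(1))
  then obtain p where p: "bij p" "\<And>j. p ` R j = F j"
    by blast
  then have "summable (\<lambda>n. x (p n))"
    using assms unfolding unconditionally_convergent_def by blast
  then have "\<exists>N. \<forall>m\<ge>N. \<forall>n. norm (\<Sum>i=m..<n. x (p i)) < e"
    using e unfolding summable_Cauchy by blast
  then obtain N where N: "\<forall>m\<ge>N. \<forall>n. norm (\<Sum>i=m..<n. x (p i)) < e"
    by blast
  have "strict_mono a"
    unfolding strict_mono_Suc_iff using ab by (simp add: trans_less_add1)
  then have "N \<le> b N"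
    using strict_mono_imp_increasing[of a N] ab(1)[of N] by linarith
  moreover have "(\<Sum>i=b N..<a (Suc N). x (p i)) = sum x (F N)"
    using sum.reindex[OF inj_on_subset[OF bij_is_inj[OF p(1)] subset_UNIV], of x "R N"] p(2)
    by (simp add: R_def comp_def)
  ultimately show False
    using N norm[of N] by (metis not_le)
qed

lemma unconditionally_convergent_iff_Cauchy:
  fixes x :: "nat \<Rightarrow> 'a::banach"
  shows "unconditionally_convergent x \<longleftrightarrow> unconditionally_Cauchy x"
proof
  assume "unconditionally_Cauchy x"
  then show "unconditionally_convergent x"
    by (simp add: unconditionally_convergent_def unconditionally_Cauchy_summable_reindex bij_is_inj)
qed (rule unconditionally_convergent_imp_Cauchy)

section \<open>Selections of terms\<close>

lemma LIMSEQ_imp_I_convergent_to: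
  assumes finite_in: "\<And>F. finite F \<Longrightarrow> F \<in> I" and lim: "y \<longlonglongrightarrow> L"
  shows "I_convergent_to I y L"
  unfolding I_convergent_to_def
proof (intro allI impI)
  fix \<epsilon> :: real
  assume "\<epsilon> > 0"
  then obtain N where N: "\<forall>n\<ge>N. norm (y n - L) < \<epsilon>"
    using lim by (auto simp: LIMSEQ_def dist_norm)
  have "{n. \<epsilon> < norm (y n - L)} \<subseteq> {..<N}"
    using N by (auto simp: not_less[symmetric])
  then show "{n. \<epsilon> < norm (y n - L)} \<in> I"
    by (meson finite_in finite_lessThan finite_subset)
qed

definition selected_sum :: "(nat \<Rightarrow> bool) \<Rightarrow> (nat \<Rightarrow> 'a::real_normed_vector) \<Rightarrow> nat \<Rightarrow> 'a" where
  "selected_sum t x n = (\<Sum>i\<le>n. (if t i then 1 else 0) *\<^sub>R x i)"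

lemma A_set_iff: "t \<in> A_set I x \<longleftrightarrow> (\<exists>L. I_convergent_to I (selected_sum t x) L)"
  by (simp add: A_set_def I_convergent_series_def selected_sum_def[abs_def])

lemma unconditionally_Cauchy_A_set_UNIV:
  fixes x :: "nat \<Rightarrow> 'a::banach"
  assumes "\<And>F. finite F \<Longrightarrow> F \<in> I" "unconditionally_Cauchy x"
  shows "A_set I x = UNIV"
proof -
  have "t \<in> A_set I x" for t
  proof -
    have "summable (\<lambda>n. if t n then x n else 0)"
      using assms(2) by (rule unconditionally_Cauchy_summable_restrict)
    moreover have "selected_sum t x = (\<lambda>n. \<Sum>i\<le>n. if t i then x i else 0)"
      unfolding selected_sum_def[abs_def] by (intro ext sum.cong) auto
    ultimately have "selected_sum t x \<longlonglongrightarrow> (\<Sum>n. if t n then x n else 0)"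
      by (simp add: summable_LIMSEQ')
    then show ?thesis
      unfolding A_set_iff using LIMSEQ_imp_I_convergent_to[OF assms(1)] by blast
  qed
  then show ?thesis
    by blast
qed

definition blocks_close :: "(nat \<Rightarrow> nat) \<Rightarrow> (nat \<Rightarrow> 'a::real_normed_vector) \<Rightarrow> real \<Rightarrow> nat \<Rightarrow> (nat \<Rightarrow> bool) set" where
  "blocks_close nn x d M = {t. \<forall>j\<ge>M. \<forall>j'\<ge>M. \<exists>k\<in>{nn j..<nn (Suc j)}. \<exists>k'\<in>{nn j'..<nn (Suc j')}.
     norm (selected_sum t x k - selected_sum t x k') \<le> d}"

lemma A_set_subset_blocks_close:
  assumes blocks: "\<forall>A\<in>I. finite {j. {nn j..<nn (Suc j)} \<subseteq> A}" and "d > 0"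
  shows "A_set I x \<subseteq> (\<Union>M. blocks_close nn x d M)"
proof
  fix t
  assume "t \<in> A_set I x"
  then obtain L where L: "I_convergent_to I (selected_sum t x) L"
    unfolding A_set_iff by blast
  define E where "E = {n. d / 2 < norm (selected_sum t x n - L)}"
  have "E \<in> I"
    unfolding E_def using \<open>d > 0\<close> by (intro L[unfolded I_convergent_to_def, rule_format]) simp
  then obtain M where M: "\<forall>j\<in>{j. {nn j..<nn (Suc j)} \<subseteq> E}. j < M"
    using blocks finite_nat_set_iff_bounded by blast
  have close: "\<exists>k\<in>{nn j..<nn (Suc j)}. norm (selected_sum t x k - L) \<le> d / 2" if "M \<le> j" for j
  proof -
    have "\<not> {nn j..<nn (Suc j)} \<subseteq> E"
      using M that by force
    then show ?thesis
      unfolding E_def by (auto simp: not_less)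
  qed
  have "t \<in> blocks_close nn x d M"
    unfolding blocks_close_def
  proof (intro CollectI allI impI)
    fix j j'
    assume "M \<le> j" "M \<le> j'"
    then obtain k k' where k: "k \<in> {nn j..<nn (Suc j)}" "norm (selected_sum t x k - L) \<le> d / 2"
      and k': "k' \<in> {nn j'..<nn (Suc j')}" "norm (selected_sum t x k' - L) \<le> d / 2"
      using close by meson
    have "norm (selected_sum t x k - selected_sum t x k')
        = norm ((selected_sum t x k - L) - (selected_sum t x k' - L))"
      by simp
    also have "\<dots> \<le> norm (selected_sum t x k - L) + norm (selected_sum t x k' - L)"
      by (rule norm_triangle_ineq4)
    also have "\<dots> \<le> d"
      using k(2) k'(2) by simp
    finally show "\<exists>k\<in>{nn j..<nn (Suc j)}. \<exists>k'\<in>{nn j'..<nn (Suc j')}.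
        norm (selected_sum t x k - selected_sum t x k') \<le> d"
      using k(1) k'(1) by blast
  qed
  then show "t \<in> (\<Union>M. blocks_close nn x d M)"
    by blast
qed

lemma selected_sum_diff:
  assumes "k \<le> k'" "F \<subseteq> {k<..k'}" "\<And>i. i \<in> {k<..k'} \<Longrightarrow> t i \<longleftrightarrow> i \<in> F"
  shows "selected_sum t x k' - selected_sum t x k = sum x F"
proof -
  have "{..k'} = {..k} \<union> {k<..k'}"
    using assms(1) by auto
  then have "selected_sum t x k' - selected_sum t x k = (\<Sum>i\<in>{k<..k'}. (if t i then 1 else 0) *\<^sub>R x i)"
    unfolding selected_sum_def by (simp add: sum.union_disjoint ivl_disj_int)
  also have "\<dots> = (\<Sum>i\<in>{k<..k'}. if i \<in> F then x i else 0)"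
    using assms(3) by (intro sum.cong) auto
  also have "\<dots> = sum x {i\<in>{k<..k'}. i \<in> F}"
    by (rule sum.inter_filter[symmetric]) simp
  also have "{i\<in>{k<..k'}. i \<in> F} = F"
    using assms(2) by blast
  finally show ?thesis .
qed

lemma blocks_close_avoids_pattern:
  assumes nn: "strict_mono nn" and j: "M \<le> j" "j < j'"
    and F: "F \<subseteq> {nn (Suc j)..<nn j'}" "d < norm (sum x F)"
    and t: "\<And>i. i \<in> {nn j..<nn (Suc j')} \<Longrightarrow> t i \<longleftrightarrow> i \<in> F"
  shows "t \<notin> blocks_close nn x d M"
proof
  assume "t \<in> blocks_close nn x d M"
  moreover have "M \<le> j'"
    using j by simp
  ultimately obtain k k' where k: "k \<in> {nn j..<nn (Suc j)}" and k': "k' \<in> {nn j'..<nn (Suc j')}"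
    and close: "norm (selected_sum t x k - selected_sum t x k') \<le> d"
    using j(1) unfolding blocks_close_def by blast
  have "nn (Suc j) \<le> nn j'"
    using j(2) strict_mono_less_eq[OF nn] by simp
  then have "selected_sum t x k' - selected_sum t x k = sum x F"
    using k k' F(1) t by (intro selected_sum_diff) auto
  then show False
    using close F(2) by (simp add: norm_minus_commute)
qed

text \<open>Any cylinder is extended to one avoiding \<open>blocks_close nn x d M\<close> by making the selection
  agree, between two distant intervals, with a finite set \<open>F\<close> whose sum has norm at least \<open>e\<close>.\<close>

lemma nowhere_dense_blocks_close:
  assumes nn: "strict_mono nn" and d: "0 \<le> d" "d < e"
    and large: "\<And>N. \<exists>F. finite F \<and> F \<subseteq> {N..} \<and> e \<le> norm (sum x F)"
  shows "nowhere_dense (blocks_close nn x d M)"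
proof (rule nowhere_dense_cantorI)
  fix v m
  define j where "j = max M m"
  obtain F where F: "finite F" "F \<subseteq> {nn (Suc j)..}" "e \<le> norm (sum x F)"
    using large by blast
  then have "F \<noteq> {}"
    using d by auto
  define j' where "j' = max M (Suc (Max F))"
  define v' where "v' i = (if i < m then v i else i \<in> F)" for i
  have increasing: "i \<le> nn i" for i
    using nn by (rule strict_mono_imp_increasing)
  have F_between: "F \<subseteq> {nn (Suc j)..<nn j'}"
  proof
    fix i
    assume "i \<in> F"
    then have "nn (Suc j) \<le> i" "i \<le> Max F"
      using F(1,2) by auto
    moreover have "Max F < nn j'"
      using increasing[of j'] by (simp add: j'_def)
    ultimately show "i \<in> {nn (Suc j)..<nn j'}"
      by simp
  qed
  have "nn (Suc j) \<le> Max F"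
    using F(1,2) \<open>F \<noteq> {}\<close> by (meson Max_in atLeast_iff subsetD)
  then have "j < j'"
    using increasing[of "Suc j"] by (simp add: j'_def)
  have "cylinder v' (nn (Suc j')) \<inter> blocks_close nn x d M = {}"
  proof -
    have "t \<notin> blocks_close nn x d M" if t: "t \<in> cylinder v' (nn (Suc j'))" for t
    proof (rule blocks_close_avoids_pattern[OF nn _ \<open>j < j'\<close> F_between])
      show "M \<le> j" "d < norm (sum x F)"
        using F(3) d by (simp_all add: j_def)
      show "t i \<longleftrightarrow> i \<in> F" if "i \<in> {nn j..<nn (Suc j')}" for i
        using t that increasing[of j] by (auto simp: cylinder_def v'_def j_def)
    qed
    then show ?thesis
      by blast
  qed
  moreover have "m < nn (Suc j')"
    using \<open>j < j'\<close> increasing[of "Suc j'"] by (simp add: j_def)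
  moreover have "\<forall>i<m. v' i = v i"
    by (simp add: v'_def)
  ultimately show "\<exists>v' m'. m < m' \<and> (\<forall>i<m. v' i = v i) \<and> cylinder v' m' \<inter> blocks_close nn x d M = {}"
    by (intro exI[of _ v'] exI[of _ "nn (Suc j')"] conjI)
qed

lemma A_set_meager:
  assumes nn: "strict_mono nn"
    and blocks: "\<forall>A\<in>I. finite {j. {nn j..<nn (Suc j)} \<subseteq> A}"
    and not_Cauchy: "\<not> unconditionally_Cauchy x"
  shows "meager (A_set I x)"
proof -
  obtain e where "e > 0" and large: "\<And>N. \<exists>F. finite F \<and> F \<subseteq> {N..} \<and> e \<le> norm (sum x F)"
    using not_Cauchy unfolding not_unconditionally_Cauchy by blast
  have "nowhere_dense (blocks_close nn x (e / 2) M)" for M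
    using \<open>e > 0\<close> by (intro nowhere_dense_blocks_close[OF nn _ _ large]) simp_all
  then have "\<forall>M. nowhere_dense (blocks_close nn x (e / 2) M)"
    by blast
  moreover have "A_set I x \<subseteq> (\<Union>M. blocks_close nn x (e / 2) M)"
    using blocks \<open>e > 0\<close> by (intro A_set_subset_blocks_close) simp_all
  ultimately show ?thesis
    unfolding meager_iff_nowhere_dense_seq by blast
qed

theorem corollary3p3:
  fixes I :: "nat set set" and x :: "nat \<Rightarrow> 'a::banach"
  assumes "is_ideal I"
    and "has_Baire_property (ideal_as_cantor I)"
  shows "unconditionally_convergent x \<longleftrightarrow> \<not> meager (A_set I x)"
proof
  assume "unconditionally_convergent x"
  then have "A_set I x = UNIV"
    using assms(1) by (simp add: unconditionally_convergent_iff_Cauchy unconditionally_Cauchy_A_set_UNIV ideal_finite)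
  then show "\<not> meager (A_set I x)"
    using cantor_open_not_meager[OF open_UNIV] by simp
next
  assume not_meager: "\<not> meager (A_set I x)"
  obtain nn where "strict_mono nn" "\<forall>A\<in>I. finite {j. {nn j..<nn (Suc j)} \<subseteq> A}"
    by (rule meager_hereditary_interval_partition[OF ideal_subset[OF assms(1)] ideal_meager[OF assms]])
  then have "\<not> unconditionally_Cauchy x \<Longrightarrow> meager (A_set I x)"
    by (rule A_set_meager)
  with not_meager show "unconditionally_convergent x"
    by (auto simp: unconditionally_convergent_iff_Cauchy)
qed

end
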